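(* Let $G$ be a finite group. Then $\Delta_D(G)$ is Eulerian (i.e. has an Eulerian circuit) if and only if $|G|$ is odd.
   Context: For a finite group $G$, let $M(G)$ denote its Schur multiplier. A Schur cover of $G$ is a group $\tilde{G}$ with a central extension $\{e\}\to M(G)\xrightarrow{\iota}\tilde{G}\xrightarrow{\pi}G\to\{e\}$ such that $\iota(M(G))\subseteq Z(\tilde{G})\cap[\tilde{G},\tilde{G}]$ and $\tilde G$ has maximal order among such extensions. The deep commuting graph $\Delta_D(G)$ is the simple graph with vertex set $G$ in which two distinct vertices are adjacent if and only if their preimages under $\pi$ commute in $\tilde{G}$ (independent of the choice of Schur cover and preimages). *)

theory Defs
  imports "HOL-Algebra.Algebra"
begin

definition grp_center :: "('a, 'm) monoid_scheme \<Rightarrow> 'a set" where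
  "grp_center H = {z \<in> carrier H. \<forall>h \<in> carrier H. z \<otimes>\<^bsub>H\<^esub> h = h \<otimes>\<^bsub>H\<^esub> z}"

definition stem_extension ::
  "('a, 'm) monoid_scheme \<Rightarrow> ('b, 'n) monoid_scheme \<Rightarrow> ('b \<Rightarrow> 'a) \<Rightarrow> bool" where
  "stem_extension G H f \<longleftrightarrow>
     group H \<and> f \<in> hom H G \<and> f ` carrier H = carrier G \<and>
     kernel H G f \<subseteq> grp_center H \<inter> derived H (carrier H)"

text \<open>A Schur cover of G: a finite stem extension of maximal order among all
  finite stem extensions of G (every finite group is isomorphic to one whose
  carrier consists of natural numbers, so comparing with groups on type nat
  covers all finite stem extensions).\<close>
definition schur_cover ::
  "('a, 'm) monoid_scheme \<Rightarrow> ('b, 'n) monoid_scheme \<Rightarrow> ('b \<Rightarrow> 'a) \<Rightarrow> bool" where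
  "schur_cover G H f \<longleftrightarrow>
     stem_extension G H f \<and> finite (carrier H) \<and>
     (\<forall>(K :: nat monoid) (rho :: nat \<Rightarrow> 'a).
        stem_extension G K rho \<and> finite (carrier K) \<longrightarrow> card (carrier K) \<le> card (carrier H))"

definition deep_adj ::
  "('a, 'm) monoid_scheme \<Rightarrow> ('b, 'n) monoid_scheme \<Rightarrow> ('b \<Rightarrow> 'a) \<Rightarrow> 'a \<Rightarrow> 'a \<Rightarrow> bool" where
  "deep_adj G H f x y \<longleftrightarrow>
     x \<in> carrier G \<and> y \<in> carrier G \<and> x \<noteq> y \<and>
     (\<forall>a \<in> carrier H. \<forall>b \<in> carrier H. f a = x \<longrightarrow> f b = y \<longrightarrow>
        a \<otimes>\<^bsub>H\<^esub> b = b \<otimes>\<^bsub>H\<^esub> a)"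

text \<open>An Eulerian circuit of the simple graph with vertex set V and (symmetric,
  irreflexive) adjacency E: a closed walk, given as the list of visited vertices
  (first = last), traversing every edge exactly once.\<close>
definition eulerian_circuit :: "'a set \<Rightarrow> ('a \<Rightarrow> 'a \<Rightarrow> bool) \<Rightarrow> 'a list \<Rightarrow> bool" where
  "eulerian_circuit V E ws \<longleftrightarrow>
     ws \<noteq> [] \<and> set ws \<subseteq> V \<and> hd ws = last ws \<and>
     (\<forall>i < length ws - 1. E (ws ! i) (ws ! Suc i)) \<and>
     distinct (map (\<lambda>i. {ws ! i, ws ! Suc i}) [0..<length ws - 1]) \<and>
     set (map (\<lambda>i. {ws ! i, ws ! Suc i}) [0..<length ws - 1])
       = {{u, v} | u v. u \<in> V \<and> v \<in> V \<and> E u v}"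

definition eulerian :: "'a set \<Rightarrow> ('a \<Rightarrow> 'a \<Rightarrow> bool) \<Rightarrow> bool" where
  "eulerian V E \<longleftrightarrow> (\<exists>ws. eulerian_circuit V E ws)"

end

theory Submission
  imports Defs
begin

text \<open>Since the kernel of the cover \<open>f : H \<rightarrow> G\<close> is central, whether two preimages commute
  does not depend on the choice of preimages. Hence the neighbours of \<open>x = f a\<close> in the deep
  commuting graph are \<open>f (C\<^sub>H(a)) - {x}\<close>, and \<open>f (C\<^sub>H(a))\<close> is a subgroup of \<open>G\<close>, so
  \<open>deg x + 1\<close> divides \<open>|G|\<close>; the identity is adjacent to all other vertices. If the graph is
  Eulerian, the identity has even degree \<open>|G| - 1\<close>. If \<open>|G|\<close> is odd, every degree is even, and
  a longest trail through the identity is closed (its end vertex has even degree) and uses every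
  edge (rotating it to any of its vertices, no unused edge can be attached, and every vertex is
  a neighbour of the identity).\<close>

fun walk_edges :: "'a list \<Rightarrow> 'a set list" where
  "walk_edges (x # y # r) = {x, y} # walk_edges (y # r)"
| "walk_edges _ = []"

lemma walk_edges_conv_nth: "walk_edges ws = map (\<lambda>i. {ws ! i, ws ! Suc i}) [0..<length ws - 1]"
proof (induction ws rule: walk_edges.induct)
  case (1 x y r)
  have "[0..<length (x # y # r) - 1] = 0 # map Suc [0..<length (y # r) - 1]"
    by (simp add: upt_conv_Cons map_Suc_upt del: upt_Suc)
  then show ?case using 1 by (simp add: o_def del: upt_Suc)
qed auto

lemma length_walk_edges: "length (walk_edges ws) = length ws - 1"
  by (induction ws rule: walk_edges.induct) auto

lemma walk_edges_snoc:
  "walk_edges (xs @ [z]) = walk_edges xs @ (if xs = [] then [] else [{last xs, z}])"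
  by (induction xs rule: walk_edges.induct) auto

lemma walk_edges_subset: "e \<in> set (walk_edges ws) \<Longrightarrow> e \<subseteq> set ws"
  by (induction ws rule: walk_edges.induct) auto

definition graph_edges :: "'a set \<Rightarrow> ('a \<Rightarrow> 'a \<Rightarrow> bool) \<Rightarrow> 'a set set" where
  "graph_edges V E = {{u, v} | u v. u \<in> V \<and> v \<in> V \<and> E u v}"

lemma finite_graph_edges: "finite V \<Longrightarrow> finite (graph_edges V E)"
  by (rule finite_subset[of _ "Pow V"]) (auto simp: graph_edges_def)

definition trail :: "'a set \<Rightarrow> ('a \<Rightarrow> 'a \<Rightarrow> bool) \<Rightarrow> 'a list \<Rightarrow> bool" where
  "trail V E T \<longleftrightarrow> T \<noteq> [] \<and> set T \<subseteq> V \<and> successively E T \<and> distinct (walk_edges T)"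

lemma set_walk_edges_subset_graph_edges:
  "trail V E T \<Longrightarrow> set (walk_edges T) \<subseteq> graph_edges V E"
  unfolding trail_def graph_edges_def
  by (induction T rule: walk_edges.induct) auto

lemma eulerian_circuit_iff_trail:
  "eulerian_circuit V E ws \<longleftrightarrow>
     trail V E ws \<and> hd ws = last ws \<and> set (walk_edges ws) = graph_edges V E"
  unfolding eulerian_circuit_def trail_def graph_edges_def
  by (auto simp: walk_edges_conv_nth successively_conv_nth)

lemma incident_walk_edges_parity:
  assumes "ws \<noteq> []" "successively E ws" "irreflp E" "distinct (walk_edges ws)"
  shows "even (card {e \<in> set (walk_edges ws). v \<in> e} + of_bool (v = hd ws) + of_bool (v = last ws))"
  using assms
proof (induction ws rule: walk_edges.induct)
  case (1 x y r)
  let ?I = "\<lambda>ws. {e \<in> set (walk_edges ws). v \<in> e}"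
  have "x \<noteq> y" using "1.prems"(2,3) by (auto dest: irreflpD)
  have "{x, y} \<notin> set (walk_edges (y # r))" using "1.prems"(4) by simp
  moreover have "?I (x # y # r) = (if v = x \<or> v = y then insert {x, y} (?I (y # r)) else ?I (y # r))"
    by auto
  ultimately have "card (?I (x # y # r)) = card (?I (y # r)) + of_bool (v = x \<or> v = y)"
    by simp
  moreover have "even (card (?I (y # r)) + of_bool (v = y) + of_bool (v = last (y # r)))"
    using 1 by simp
  ultimately show ?case using \<open>x \<noteq> y\<close> by (cases "v = x"; cases "v = y") auto
qed auto

lemma card_incident_graph_edges:
  assumes "v \<in> V" "symp E"
  shows "card {e \<in> graph_edges V E. v \<in> e} = card {y \<in> V. E v y}"
proof -
  have "{e \<in> graph_edges V E. v \<in> e} = (\<lambda>y. {v, y}) ` {y \<in> V. E v y}"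
    using assms unfolding graph_edges_def by (auto dest: sympD)
  moreover have "inj_on (\<lambda>y. {v, y}) {y \<in> V. E v y}"
    by (auto intro!: inj_onI simp: doubleton_eq_iff)
  ultimately show ?thesis by (simp add: card_image)
qed

lemma eulerian_imp_even_degree:
  assumes "eulerian V E" "symp E" "irreflp E" "v \<in> V"
  shows "even (card {y \<in> V. E v y})"
proof -
  obtain ws where "trail V E ws" "hd ws = last ws"
    and covers: "set (walk_edges ws) = graph_edges V E"
    using assms(1) unfolding eulerian_def eulerian_circuit_iff_trail by blast
  then have "even (card {e \<in> set (walk_edges ws). v \<in> e})"
    using incident_walk_edges_parity[of ws E v] assms(3) unfolding trail_def by auto
  then show ?thesis using covers card_incident_graph_edges[OF assms(4,2)] by simp
qed

lemma trail_snoc: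
  assumes "trail V E T" "E (last T) y" "y \<in> V" "{last T, y} \<notin> set (walk_edges T)"
  shows "trail V E (T @ [y])"
  using assms unfolding trail_def by (auto simp: walk_edges_snoc successively_append_iff)

lemma trail_length_le:
  assumes "finite V" "trail V E T"
  shows "length T \<le> card (graph_edges V E) + 1"
proof -
  have "length T - 1 = card (set (walk_edges T))"
    using assms(2) unfolding trail_def by (simp add: distinct_card length_walk_edges)
  also have "\<dots> \<le> card (graph_edges V E)"
    using assms by (intro card_mono finite_graph_edges set_walk_edges_subset_graph_edges)
  finally show ?thesis by linarith
qed

lemma longest_trail_through:
  assumes "finite V" "c \<in> V"
  obtains T where "trail V E T" "c \<in> set T"
    "\<And>T'. trail V E T' \<Longrightarrow> c \<in> set T' \<Longrightarrow> length T' \<le> length T"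
proof -
  have "trail V E [c]" using assms(2) by (simp add: trail_def)
  then show thesis
    using that ex_has_greatest_nat[of "\<lambda>T. trail V E T \<and> c \<in> set T" "[c]" length
        "card (graph_edges V E) + 2"] trail_length_le[OF assms(1)]
    by force
qed

lemma closed_trail_rotate1:
  assumes "trail V E (a # r)" "r \<noteq> []" "last r = a"
  shows "trail V E (r @ [hd r])" "set (walk_edges (r @ [hd r])) = set (walk_edges (a # r))"
proof -
  have "walk_edges (a # r) = {a, hd r} # walk_edges r"
    using assms(2) by (cases r) auto
  moreover have "walk_edges (r @ [hd r]) = walk_edges r @ [{a, hd r}]"
    using assms(2,3) by (simp add: walk_edges_snoc insert_commute)
  moreover have "E a (hd r)"
    using assms(1,2) unfolding trail_def by (cases r) auto
  ultimately show "trail V E (r @ [hd r])" "set (walk_edges (r @ [hd r])) = set (walk_edges (a # r))"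
    using assms unfolding trail_def by (auto simp: successively_append_iff successively_Cons)
qed

lemma closed_trail_rotate:
  assumes "trail V E T" "hd T = last T" "n < length T"
  shows "\<exists>T'. trail V E T' \<and> hd T' = T ! n \<and> last T' = T ! n \<and> length T' = length T \<and>
    set T' = set T \<and> set (walk_edges T') = set (walk_edges T)"
  using assms
proof (induction n arbitrary: T)
  case 0
  then show ?case by (auto simp: hd_conv_nth trail_def)
next
  case (Suc n)
  then obtain a r where T: "T = a # r" and "r \<noteq> []"
    by (cases T; cases "tl T") auto
  moreover have "last r = a" using Suc.prems(2) T \<open>r \<noteq> []\<close> by simp
  ultimately have rotated: "trail V E (r @ [hd r])"
    and same_edges: "set (walk_edges (r @ [hd r])) = set (walk_edges T)"
    using closed_trail_rotate1[of V E a r] Suc.prems(1) by simp_all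
  have same_vertices: "set (r @ [hd r]) = set T"
    using T \<open>r \<noteq> []\<close> \<open>last r = a\<close> by auto
  have same_length: "length (r @ [hd r]) = length T" using T by simp
  have nth: "(r @ [hd r]) ! n = T ! Suc n" using Suc.prems(3) T by (simp add: nth_append)
  have "hd (r @ [hd r]) = last (r @ [hd r])" "n < length (r @ [hd r])"
    using \<open>r \<noteq> []\<close> Suc.prems(3) same_length by auto
  from Suc.IH[OF rotated this] show ?case
    unfolding same_edges same_vertices same_length nth .
qed

lemma trail_closed_if_unextendable:
  assumes "trail V E T" "symp E" "irreflp E" "even (card {y \<in> V. E (last T) y})"
    and stuck: "\<And>y. E (last T) y \<Longrightarrow> {last T, y} \<in> set (walk_edges T)"
  shows "hd T = last T"
proof (rule ccontr)
  assume open_trail: "hd T \<noteq> last T"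
  let ?w = "last T"
  have "?w \<in> V" using assms(1) unfolding trail_def by auto
  have "{e \<in> graph_edges V E. ?w \<in> e} = {e \<in> set (walk_edges T). ?w \<in> e}"
    using set_walk_edges_subset_graph_edges[OF assms(1)] stuck assms(2)
    unfolding graph_edges_def by (auto dest: sympD simp: insert_commute)
  moreover have "odd (card {e \<in> set (walk_edges T). ?w \<in> e})"
    using incident_walk_edges_parity[of T E ?w] assms(1,3) open_trail
    unfolding trail_def by auto
  ultimately show False
    using assms(4) card_incident_graph_edges[OF \<open>?w \<in> V\<close> assms(2)] by simp
qed

lemma trail_covers_if_universal_vertex:
  assumes "trail V E T" "c \<in> set T" "\<And>x. x \<in> V - {c} \<Longrightarrow> E c x"
    and saturated: "\<And>u z. u \<in> set T \<Longrightarrow> E u z \<Longrightarrow> {u, z} \<in> set (walk_edges T)"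
  shows "set (walk_edges T) = graph_edges V E"
proof
  show "set (walk_edges T) \<subseteq> graph_edges V E"
    using assms(1) by (rule set_walk_edges_subset_graph_edges)
  have "x \<in> set T" if "x \<in> V" for x
  proof (cases "x = c")
    case False
    then have "{c, x} \<in> set (walk_edges T)" using that assms(2,3) saturated by blast
    then show ?thesis by (auto dest: walk_edges_subset)
  qed (use assms(2) in simp)
  then show "graph_edges V E \<subseteq> set (walk_edges T)"
    using saturated unfolding graph_edges_def by blast
qed

lemma eulerian_if_universal_vertex_and_even_degrees:
  assumes "finite V" "c \<in> V" "\<And>x y. E x y \<Longrightarrow> y \<in> V" "symp E" "irreflp E"
    and universal: "\<And>x. x \<in> V - {c} \<Longrightarrow> E c x"
    and even_degree: "\<And>v. v \<in> V \<Longrightarrow> even (card {y \<in> V. E v y})"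
  shows "eulerian V E"
proof -
  obtain T where T: "trail V E T" "c \<in> set T"
    and longest: "\<And>T'. trail V E T' \<Longrightarrow> c \<in> set T' \<Longrightarrow> length T' \<le> length T"
    using longest_trail_through[OF assms(1,2)] by blast
  have unextendable: "{last T', y} \<in> set (walk_edges T')"
    if "trail V E T'" "c \<in> set T'" "length T' = length T" "E (last T') y" for T' y
    using trail_snoc[OF that(1,4) assms(3)[OF that(4)]] longest[of "T' @ [y]"] that(2,3)
    by fastforce
  have "last T \<in> V" using T(1) unfolding trail_def by auto
  have closed: "hd T = last T"
    using trail_closed_if_unextendable[OF T(1) assms(4,5) even_degree[OF \<open>last T \<in> V\<close>]]
      unextendable[OF T refl] by blast
  have "{u, z} \<in> set (walk_edges T)" if "u \<in> set T" "E u z" for u z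
  proof -
    obtain n where "n < length T" "T ! n = u" using \<open>u \<in> set T\<close> by (meson in_set_conv_nth)
    then obtain T' where "trail V E T'" "last T' = u" "length T' = length T"
      "set T' = set T" "set (walk_edges T') = set (walk_edges T)"
      using closed_trail_rotate[OF T(1) closed] by blast
    then show ?thesis using unextendable[of T' z] T(2) \<open>E u z\<close> by auto
  qed
  then have "set (walk_edges T) = graph_edges V E"
    using trail_covers_if_universal_vertex[OF T universal] by blast
  then show ?thesis
    unfolding eulerian_def eulerian_circuit_iff_trail using T(1) closed by blast
qed

definition centralizer :: "('a, 'm) monoid_scheme \<Rightarrow> 'a \<Rightarrow> 'a set" where
  "centralizer H a = {b \<in> carrier H. a \<otimes>\<^bsub>H\<^esub> b = b \<otimes>\<^bsub>H\<^esub> a}"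

lemma (in group) subgroup_centralizer:
  assumes "a \<in> carrier G"
  shows "subgroup (centralizer G a) G"
proof (rule subgroupI)
  show "centralizer G a \<subseteq> carrier G" "centralizer G a \<noteq> {}"
    using assms by (auto simp: centralizer_def intro!: exI[of _ \<one>])
next
  fix b assume "b \<in> centralizer G a"
  then have b: "b \<in> carrier G" "a \<otimes> b = b \<otimes> a" by (auto simp: centralizer_def)
  have "inv b \<otimes> a = inv b \<otimes> (a \<otimes> b) \<otimes> inv b" using b(1) assms by (simp add: m_assoc)
  also have "\<dots> = inv b \<otimes> (b \<otimes> a) \<otimes> inv b" using b(2) by simp
  also have "\<dots> = a \<otimes> inv b" using b(1) assms by (simp add: m_assoc[symmetric])
  finally show "inv b \<in> centralizer G a" using b by (simp add: centralizer_def)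
next
  fix b c assume "b \<in> centralizer G a" "c \<in> centralizer G a"
  then have "b \<in> carrier G" "c \<in> carrier G" "a \<otimes> b = b \<otimes> a" "a \<otimes> c = c \<otimes> a"
    by (auto simp: centralizer_def)
  then show "b \<otimes> c \<in> centralizer G a"
    using assms by (simp add: centralizer_def m_assoc[symmetric]) (simp add: m_assoc)
qed

lemma (in group) centralizer_one: "centralizer G \<one> = carrier G"
  by (auto simp: centralizer_def)

lemma (in group) mult_central_commute:
  assumes "u \<in> carrier G" "v \<in> carrier G" "u \<otimes> v = v \<otimes> u" "k \<in> grp_center G"
  shows "(u \<otimes> k) \<otimes> v = v \<otimes> (u \<otimes> k)"
proof -
  have k: "k \<in> carrier G" "k \<otimes> v = v \<otimes> k" using assms(2,4) by (auto simp: grp_center_def)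
  have "(u \<otimes> k) \<otimes> v = u \<otimes> (v \<otimes> k)" using assms k by (simp add: m_assoc)
  also have "\<dots> = (v \<otimes> u) \<otimes> k" using assms k by (simp add: m_assoc[symmetric])
  finally show ?thesis using assms k by (simp add: m_assoc)
qed

lemma deep_adj_symp: "symp (deep_adj G H f)"
  unfolding deep_adj_def by (rule sympI) metis

lemma deep_adj_irreflp: "irreflp (deep_adj G H f)"
  by (simp add: deep_adj_def irreflpI)

lemma deep_adj_carrier: "deep_adj G H f x y \<Longrightarrow> y \<in> carrier G"
  by (simp add: deep_adj_def)

locale central_extension =
  cover: group H + base: group G for H (structure) and G (structure) +
  fixes f
  assumes hom: "f \<in> hom H G"
    and surjective: "f ` carrier H = carrier G"
    and kernel_central: "kernel H G f \<subseteq> grp_center H"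

sublocale central_extension \<subseteq> group_hom H G f
  by unfold_locales (rule hom)

lemma stem_extension_imp_central_extension:
  "group G \<Longrightarrow> stem_extension G H f \<Longrightarrow> central_extension H G f"
  unfolding stem_extension_def central_extension_def central_extension_axioms_def by auto

context central_extension
begin

lemma fibre_eq_mult_central:
  assumes "x \<in> carrier H" "x0 \<in> carrier H" "f x = f x0"
  obtains k where "k \<in> grp_center H" "x = x0 \<otimes>\<^bsub>H\<^esub> k"
proof
  have "f (inv\<^bsub>H\<^esub> x0 \<otimes>\<^bsub>H\<^esub> x) = \<one>\<^bsub>G\<^esub>" using assms by simp
  then show "inv\<^bsub>H\<^esub> x0 \<otimes>\<^bsub>H\<^esub> x \<in> grp_center H"
    using assms kernel_central unfolding kernel_def by auto
  show "x = x0 \<otimes>\<^bsub>H\<^esub> (inv\<^bsub>H\<^esub> x0 \<otimes>\<^bsub>H\<^esub> x)"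
    using assms by (simp add: cover.m_assoc[symmetric])
qed

lemma preimages_commute:
  assumes "a0 \<in> carrier H" "b0 \<in> carrier H" "a0 \<otimes>\<^bsub>H\<^esub> b0 = b0 \<otimes>\<^bsub>H\<^esub> a0"
    and "a \<in> carrier H" "b \<in> carrier H" "f a = f a0" "f b = f b0"
  shows "a \<otimes>\<^bsub>H\<^esub> b = b \<otimes>\<^bsub>H\<^esub> a"
proof -
  obtain k where k: "k \<in> grp_center H" "a = a0 \<otimes>\<^bsub>H\<^esub> k"
    using fibre_eq_mult_central[OF assms(4,1,6)] .
  obtain k' where k': "k' \<in> grp_center H" "b = b0 \<otimes>\<^bsub>H\<^esub> k'"
    using fibre_eq_mult_central[OF assms(5,2,7)] .
  have "a \<otimes>\<^bsub>H\<^esub> b0 = b0 \<otimes>\<^bsub>H\<^esub> a"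
    using cover.mult_central_commute[OF assms(1-3) k(1)] k(2) by simp
  then have "b \<otimes>\<^bsub>H\<^esub> a = a \<otimes>\<^bsub>H\<^esub> b"
    using cover.mult_central_commute[OF assms(2,4) _ k'(1)] k'(2) by simp
  then show ?thesis by simp
qed

lemma deep_neighbours_eq_image_centralizer:
  assumes "a0 \<in> carrier H"
  shows "{y \<in> carrier G. deep_adj G H f (f a0) y} = f ` centralizer H a0 - {f a0}"
proof
  show "{y \<in> carrier G. deep_adj G H f (f a0) y} \<subseteq> f ` centralizer H a0 - {f a0}"
  proof
    fix y assume y: "y \<in> {y \<in> carrier G. deep_adj G H f (f a0) y}"
    then have adj: "deep_adj G H f (f a0) y" by simp
    have "y \<in> f ` carrier H" using y surjective by simp
    then obtain b where b: "b \<in> carrier H" "f b = y" by blast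
    then have "b \<in> centralizer H a0"
      using adj assms unfolding deep_adj_def centralizer_def by blast
    moreover have "y \<noteq> f a0" using adj by (auto simp: deep_adj_def)
    ultimately show "y \<in> f ` centralizer H a0 - {f a0}" using b(2) by blast
  qed
  show "f ` centralizer H a0 - {f a0} \<subseteq> {y \<in> carrier G. deep_adj G H f (f a0) y}"
  proof
    fix y assume "y \<in> f ` centralizer H a0 - {f a0}"
    then obtain b where b: "b \<in> carrier H" "a0 \<otimes>\<^bsub>H\<^esub> b = b \<otimes>\<^bsub>H\<^esub> a0" "f b = y" "y \<noteq> f a0"
      by (auto simp: centralizer_def)
    then show "y \<in> {y \<in> carrier G. deep_adj G H f (f a0) y}"
      using assms preimages_commute[OF assms b(1,2)] unfolding deep_adj_def by auto
  qed
qed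

lemma deep_neighbours_one:
  "{y \<in> carrier G. deep_adj G H f \<one>\<^bsub>G\<^esub> y} = carrier G - {\<one>\<^bsub>G\<^esub>}"
  using deep_neighbours_eq_image_centralizer[OF cover.one_closed] by (simp add: cover.centralizer_one surjective)

lemma deep_degree_dvd_order:
  assumes "finite (carrier G)" "x \<in> carrier G"
  shows "card {y \<in> carrier G. deep_adj G H f x y} + 1 dvd order G"
proof -
  have "x \<in> f ` carrier H" using assms(2) surjective by simp
  then obtain a0 where a0: "a0 \<in> carrier H" "f a0 = x" by blast
  let ?S = "f ` centralizer H a0"
  have "subgroup ?S G"
    using a0(1) by (intro subgroup_img_is_subgroup cover.subgroup_centralizer)
  then have "card ?S dvd order G"
    by (metis base.lagrange dvd_triv_right)
  moreover have "card ?S = Suc (card (?S - {x}))"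
  proof (rule card.remove)
    show "finite ?S"
      using assms(1) finite_subset[OF subgroup.subset[OF \<open>subgroup ?S G\<close>]] by blast
    show "x \<in> ?S" using a0 by (auto simp: centralizer_def)
  qed
  ultimately show ?thesis using deep_neighbours_eq_image_centralizer[OF a0(1)] a0(2) by simp
qed

lemma even_deep_degree_if_odd_order:
  assumes "finite (carrier G)" "odd (order G)" "x \<in> carrier G"
  shows "even (card {y \<in> carrier G. deep_adj G H f x y})"
  using deep_degree_dvd_order[OF assms(1,3)] assms(2) dvd_trans by fastforce

end

theorem theorem3p4:
  fixes G :: "'a monoid" and H :: "'b monoid" and f :: "'b \<Rightarrow> 'a"
  assumes "group G" and "finite (carrier G)" and "schur_cover G H f"
  shows "eulerian (carrier G) (deep_adj G H f) \<longleftrightarrow> odd (card (carrier G))"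
proof -
  interpret central_extension H G f
    using assms(1,3) stem_extension_imp_central_extension unfolding schur_cover_def by blast
  have card_G: "card (carrier G) = Suc (card (carrier G - {\<one>\<^bsub>G\<^esub>}))"
    using assms(2) base.one_closed by (rule card.remove)
  show ?thesis
    unfolding order_def[symmetric]
  proof
    assume "eulerian (carrier G) (deep_adj G H f)"
    then have "even (card {y \<in> carrier G. deep_adj G H f \<one>\<^bsub>G\<^esub> y})"
      using deep_adj_symp deep_adj_irreflp base.one_closed by (rule eulerian_imp_even_degree)
    then show "odd (order G)"
      unfolding deep_neighbours_one order_def card_G by simp
  next
    assume odd: "odd (order G)"
    have universal: "deep_adj G H f \<one>\<^bsub>G\<^esub> x" if "x \<in> carrier G - {\<one>\<^bsub>G\<^esub>}" for x
      using that deep_neighbours_one by blast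
    show "eulerian (carrier G) (deep_adj G H f)"
      using assms(2) base.one_closed deep_adj_carrier deep_adj_symp deep_adj_irreflp universal
        even_deep_degree_if_odd_order[OF assms(2) odd]
      by (rule eulerian_if_universal_vertex_and_even_degrees)
  qed
qed

end
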